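(* Let $G$ be a pro-$p$ group such that all quotients $\gamma_i(G)/\gamma_{i+1}(G)$ of its lower central series are torsion-free, and let $\varphi$ be an automorphism of $G$ of finite order that acts trivially on the abelianization $G/[G,G]$. Then $\varphi$ is the identity.
   Context: For a pro-$p$ group $G$, $\gamma_1(G)=G$ and $\gamma_{i+1}(G)=\overline{[\gamma_i(G),G]}$ (closed subgroups) denote the terms of the lower central series; $[G,G]$ denotes the closed commutator subgroup. *)

theory Defs
  imports "HOL-Analysis.Analysis" "HOL-Algebra.Algebra"
begin

definition topological_group :: "('a, 'b) monoid_scheme \<Rightarrow> 'a topology \<Rightarrow> bool" where
  "topological_group G T \<longleftrightarrow> group G \<and> topspace T = carrier G \<and>
     continuous_map (prod_topology T T) T (\<lambda>(x, y). mult G x y) \<and>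
     continuous_map T T (\<lambda>x. m_inv G x)"

definition totally_disconnected_space :: "'a topology \<Rightarrow> bool" where
  "totally_disconnected_space T \<longleftrightarrow> (\<forall>x y. connected_component_of T x y \<longrightarrow> x = y)"

definition profinite_group :: "('a, 'b) monoid_scheme \<Rightarrow> 'a topology \<Rightarrow> bool" where
  "profinite_group G T \<longleftrightarrow> topological_group G T \<and> compact_space T \<and> Hausdorff_space T \<and>
     totally_disconnected_space T"

text \<open>Pro-p group: profinite group in which every open normal subgroup has p-power index
  (equivalently, an inverse limit of finite p-groups).\<close>
definition pro_p_group :: "nat \<Rightarrow> ('a, 'b) monoid_scheme \<Rightarrow> 'a topology \<Rightarrow> bool" where
  "pro_p_group p G T \<longleftrightarrow> Factorial_Ring.prime p \<and> profinite_group G T \<and>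
     (\<forall>N. N \<lhd> G \<and> openin T N \<longrightarrow> (\<exists>k. card (RCOSETS G N) = p ^ k))"

definition commutator :: "('a, 'b) monoid_scheme \<Rightarrow> 'a \<Rightarrow> 'a \<Rightarrow> 'a" where
  "commutator G x y = mult G (mult G (mult G (m_inv G x) (m_inv G y)) x) y"

definition closed_commutator :: "('a, 'b) monoid_scheme \<Rightarrow> 'a topology \<Rightarrow> 'a set \<Rightarrow> 'a set \<Rightarrow> 'a set" where
  "closed_commutator G T A B =
     T closure_of (generate G {commutator G a b | a b. a \<in> A \<and> b \<in> B})"

text \<open>Lower central series: gamma 1 = G, gamma (i+1) = closure of [gamma i, G].
  (gamma 0 is set to G as well, a harmless convention.)\<close>
fun lower_central :: "('a, 'b) monoid_scheme \<Rightarrow> 'a topology \<Rightarrow> nat \<Rightarrow> 'a set" where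
  "lower_central G T 0 = carrier G"
| "lower_central G T (Suc 0) = carrier G"
| "lower_central G T (Suc (Suc i)) =
     closed_commutator G T (lower_central G T (Suc i)) (carrier G)"

definition torsion_free_group :: "('a, 'b) monoid_scheme \<Rightarrow> bool" where
  "torsion_free_group H \<longleftrightarrow>
     (\<forall>x \<in> carrier H. \<forall>n::nat. n > 0 \<and> pow H x n = one H \<longrightarrow> x = one H)"

end

theory Submission
  imports Defs
begin

text \<open>
  Write \<open>\<delta>(x) = x\<inverse>\<phi>(x)\<close>; by hypothesis \<open>\<delta>\<close> takes values in \<open>\<gamma>\<^sub>2\<close>. If \<open>\<delta>\<close> takes values in
  \<open>\<gamma>\<^sub>k\<close>, these values are central modulo \<open>\<gamma>\<^sub>k\<^sub>+\<^sub>1\<close>, so \<open>\<delta>\<close> becomes a homomorphism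
  \<open>G \<rightarrow> G/\<gamma>\<^sub>k\<^sub>+\<^sub>1\<close> with abelian image. Being continuous, it then kills the closed
  subgroup \<open>\<gamma>\<^sub>2\<close>, in particular the values of \<open>\<delta>\<close>; hence \<open>\<delta> \<circ> \<phi> = \<delta>\<close> modulo \<open>\<gamma>\<^sub>k\<^sub>+\<^sub>1\<close>
  and \<open>\<phi>\<^sup>j(x) \<equiv> x \<delta>(x)\<^sup>j\<close>. Taking \<open>j\<close> the order of \<open>\<phi>\<close> shows that \<open>\<delta>(x)\<close> is torsion
  in \<open>\<gamma>\<^sub>k/\<gamma>\<^sub>k\<^sub>+\<^sub>1\<close>, so \<open>\<delta>(x) \<in> \<gamma>\<^sub>k\<^sub>+\<^sub>1\<close>. Thus \<open>\<delta>(x)\<close> lies in every \<open>\<gamma>\<^sub>k\<close>, and this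
  intersection is trivial in a pro-\<open>p\<close> group: open normal subgroups separate points, and each
  open normal \<open>N\<close> contains some \<open>\<gamma>\<^sub>m\<close> because \<open>G/N\<close> is a finite \<open>p\<close>-group, hence nilpotent.
\<close>

section \<open>Commutators\<close>

definition commutator_set :: "('a, 'b) monoid_scheme \<Rightarrow> 'a set \<Rightarrow> 'a set \<Rightarrow> 'a set" where
  "commutator_set G A B = {commutator G a b | a b. a \<in> A \<and> b \<in> B}"

definition central_mod :: "('a, 'b) monoid_scheme \<Rightarrow> 'a set \<Rightarrow> 'a set" where
  "central_mod G K = {z \<in> carrier G. \<forall>g \<in> carrier G. commutator G z g \<in> K}"

lemma closed_commutator_eq:
  "closed_commutator G T A B = T closure_of generate G (commutator_set G A B)"
  by (simp add: closed_commutator_def commutator_set_def)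

context group
begin

lemma mult_inv_cancel_left [simp]: "x \<in> carrier G \<Longrightarrow> y \<in> carrier G \<Longrightarrow> x \<otimes> (inv x \<otimes> y) = y"
  by (simp add: m_assoc[symmetric])

lemma inv_mult_cancel_left [simp]: "x \<in> carrier G \<Longrightarrow> y \<in> carrier G \<Longrightarrow> inv x \<otimes> (x \<otimes> y) = y"
  by (simp add: m_assoc[symmetric])

lemma commutator_closed [simp]:
  "a \<in> carrier G \<Longrightarrow> b \<in> carrier G \<Longrightarrow> commutator G a b \<in> carrier G"
  by (simp add: commutator_def)

lemma commutator_eq_one_iff:
  assumes "a \<in> carrier G" "b \<in> carrier G"
  shows "commutator G a b = \<one> \<longleftrightarrow> a \<otimes> b = b \<otimes> a"
proof -
  have "commutator G a b = inv (b \<otimes> a) \<otimes> (a \<otimes> b)"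
    using assms by (simp add: commutator_def m_assoc inv_mult_group)
  then show ?thesis
    using assms by (metis inv_closed inv_solve_left l_inv m_closed r_one)
qed

lemma conj_commutator:
  assumes "a \<in> carrier G" "b \<in> carrier G" "g \<in> carrier G"
  shows "g \<otimes> commutator G a b \<otimes> inv g = commutator G (g \<otimes> a \<otimes> inv g) (g \<otimes> b \<otimes> inv g)"
  using assms by (simp add: commutator_def m_assoc inv_mult_group)

lemma commutator_set_subset_normal:
  assumes "K \<lhd> G"
  shows "commutator_set G K (carrier G) \<subseteq> K"
proof
  interpret K: normal K G by fact
  fix c assume "c \<in> commutator_set G K (carrier G)"
  then obtain a b where ab: "c = commutator G a b" "a \<in> K" "b \<in> carrier G"
    by (auto simp: commutator_set_def)
  then have "inv a \<otimes> (inv b \<otimes> a \<otimes> b) \<in> K"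
    using K.inv_op_closed1 by (simp add: K.m_closed K.m_inv_closed)
  then show "c \<in> K"
    using ab K.subset by (simp add: commutator_def m_assoc subsetD)
qed

lemma commutator_set_conj_closed:
  assumes "K \<lhd> G" "c \<in> commutator_set G K (carrier G)" "g \<in> carrier G"
  shows "g \<otimes> c \<otimes> inv g \<in> commutator_set G K (carrier G)"
proof -
  interpret K: normal K G by fact
  obtain a b where ab: "c = commutator G a b" "a \<in> K" "b \<in> carrier G"
    using assms(2) by (auto simp: commutator_set_def)
  then have "g \<otimes> c \<otimes> inv g = commutator G (g \<otimes> a \<otimes> inv g) (g \<otimes> b \<otimes> inv g)"
    using conj_commutator assms(3) K.subset by blast
  moreover have "g \<otimes> a \<otimes> inv g \<in> K"
    using K.inv_op_closed2 assms(3) ab(2) by blast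
  ultimately show ?thesis
    using assms(3) ab(3) by (auto simp: commutator_set_def)
qed

lemma normal_generate_commutator_set:
  assumes "K \<lhd> G" "S \<subseteq> carrier G"
    and "\<And>s g. s \<in> S \<Longrightarrow> g \<in> carrier G \<Longrightarrow> g \<otimes> s \<otimes> inv g \<in> S"
  shows "generate G (commutator_set G K (carrier G) \<union> S) \<lhd> G"
proof (rule normal_generateI)
  show "commutator_set G K (carrier G) \<union> S \<subseteq> carrier G"
    using assms(2) normal_imp_subgroup[OF assms(1)] subgroup.subset
    by (fastforce simp: commutator_set_def)
qed (use assms commutator_set_conj_closed in blast)

lemma subgroup_central_mod:
  assumes "K \<lhd> G"
  shows "subgroup (central_mod G K) G"
proof -
  interpret K: normal K G by fact
  show ?thesis
  proof (rule subgroupI)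
    show "central_mod G K \<noteq> {}"
      using K.one_closed by (auto simp: central_mod_def commutator_def intro!: exI[of _ \<one>])
  next
    fix a assume a: "a \<in> central_mod G K"
    then have aG: "a \<in> carrier G" by (simp add: central_mod_def)
    have "commutator G (inv a) g \<in> K" if g: "g \<in> carrier G" for g
    proof -
      have "commutator G (inv a) g = a \<otimes> inv (commutator G a g) \<otimes> inv a"
        using aG g by (simp add: commutator_def m_assoc inv_mult_group)
      then show ?thesis
        using a g K.inv_op_closed2[OF aG] K.m_inv_closed by (simp add: central_mod_def)
    qed
    then show "inv a \<in> central_mod G K" using aG by (simp add: central_mod_def)
  next
    fix a b assume a: "a \<in> central_mod G K" and b: "b \<in> central_mod G K"
    then have aG: "a \<in> carrier G" and bG: "b \<in> carrier G" by (auto simp: central_mod_def)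
    have "commutator G (a \<otimes> b) g \<in> K" if g: "g \<in> carrier G" for g
    proof -
      have "commutator G (a \<otimes> b) g = inv b \<otimes> commutator G a g \<otimes> b \<otimes> commutator G b g"
        using aG bG g by (simp add: commutator_def m_assoc inv_mult_group)
      then show ?thesis
        using a b g K.inv_op_closed1[OF bG] K.m_closed by (simp add: central_mod_def)
    qed
    then show "a \<otimes> b \<in> central_mod G K" using aG bG by (simp add: central_mod_def)
  qed (auto simp: central_mod_def)
qed

lemma normal_subset_central_mod:
  assumes "K \<lhd> G"
  shows "K \<subseteq> central_mod G K"
  using commutator_set_subset_normal[OF assms] normal_imp_subgroup[OF assms] subgroup.subset
  by (fastforce simp: central_mod_def commutator_set_def)

end

lemma (in group_hom) hom_commutator:
  "a \<in> carrier G \<Longrightarrow> b \<in> carrier G \<Longrightarrow> h (commutator G a b) = commutator H (h a) (h b)"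
  by (simp add: commutator_def)

context normal
begin

lemma r_coset_eq_self_iff:
  assumes "x \<in> carrier G"
  shows "H #> x = H \<longleftrightarrow> x \<in> H"
  using rcos_self[OF assms subgroup_axioms] rcos_const[OF is_group] by auto

lemma group_hom_r_coset_Mod:
  "group_hom G (G Mod H) ((#>) H)"
  by (simp add: group_hom_def group_hom_axioms_def is_group factorgroup_is_group r_coset_hom_Mod)

lemma commute_Mod_iff:
  assumes "a \<in> carrier G" "b \<in> carrier G"
  shows "(H #> a) \<otimes>\<^bsub>G Mod H\<^esub> (H #> b) = (H #> b) \<otimes>\<^bsub>G Mod H\<^esub> (H #> a)
    \<longleftrightarrow> commutator G a b \<in> H"
proof -
  interpret \<pi>: group_hom G "G Mod H" "(#>) H" by (rule group_hom_r_coset_Mod)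
  have "(H #> a) \<otimes>\<^bsub>G Mod H\<^esub> (H #> b) = (H #> b) \<otimes>\<^bsub>G Mod H\<^esub> (H #> a)
    \<longleftrightarrow> commutator (G Mod H) (H #> a) (H #> b) = \<one>\<^bsub>G Mod H\<^esub>"
    using \<pi>.H.commutator_eq_one_iff[OF \<pi>.hom_closed[OF assms(1)] \<pi>.hom_closed[OF assms(2)]]
    by simp
  also have "\<dots> \<longleftrightarrow> commutator G a b \<in> H"
    using assms by (simp add: \<pi>.hom_commutator[symmetric] r_coset_eq_self_iff)
  finally show ?thesis .
qed

lemma mem_if_pow_mem_torsion_free:
  fixes n :: nat
  assumes tf: "torsion_free_group ((G\<lparr>carrier := K\<rparr>) Mod H)"
    and "H \<subseteq> K" "K \<subseteq> carrier G" and y: "y \<in> K" "y [^] n \<in> H" "n > 0"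
  shows "y \<in> H"
proof -
  let ?Q = "(G\<lparr>carrier := K\<rparr>) Mod H"
  have set_mult_eq: "set_mult (G\<lparr>carrier := K\<rparr>) A B = A <#> B" for A B
    by (simp add: set_mult_def)
  have yG: "y \<in> carrier G" using y assms(3) by blast
  have pow: "(H #> y) [^]\<^bsub>?Q\<^esub> m = H #> (y [^] m)" for m :: nat
  proof (induction m)
    case 0 then show ?case using subset by (simp add: FactGroup_def)
  next
    case (Suc m)
    then show ?case
      using yG by (simp add: FactGroup_def set_mult_eq rcos_sum)
  qed
  have "H #> y \<in> carrier ?Q"
    using y(1) by (auto simp: FactGroup_def RCOSETS_def r_coset_def)
  moreover have "(H #> y) [^]\<^bsub>?Q\<^esub> n = \<one>\<^bsub>?Q\<^esub>"
    unfolding pow rcos_const[OF is_group y(2)] by (simp add: FactGroup_def)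
  ultimately have "H #> y = \<one>\<^bsub>?Q\<^esub>"
    using tf y(3) unfolding torsion_free_group_def by blast
  then have "H #> y = H" by (simp add: FactGroup_def)
  then show ?thesis using r_coset_eq_self_iff yG by blast
qed

end

section \<open>Fixed points of \<open>p\<close>-group actions\<close>

lemma (in group_action) restrict_action:
  assumes "F \<subseteq> E" and F: "\<And>g x. g \<in> carrier G \<Longrightarrow> x \<in> F \<Longrightarrow> \<phi> g x \<in> F"
  shows "group_action G F (\<lambda>g. restrict (\<phi> g) F)"
proof -
  interpret group G using group_hom group_hom.axioms(1) by auto
  have Bij: "restrict (\<phi> g) F \<in> Bij F" if g: "g \<in> carrier G" for g
  proof -
    have "F \<subseteq> \<phi> g ` F"
    proof
      fix y assume y: "y \<in> F"
      then have "\<phi> g (\<phi> (inv g) y) = y"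
        using orbit_sym_aux[of "inv g" y] g assms(1) F by auto
      then show "y \<in> \<phi> g ` F" using F g y by (metis image_eqI inv_closed)
    qed
    then have "bij_betw (\<phi> g) F F"
      using F g inj_on_subset[OF inj_prop[OF g] assms(1)] by (auto simp: bij_betw_def)
    then show ?thesis by (simp add: Bij_def)
  qed
  have "group_hom G (BijGroup F) (\<lambda>g. restrict (\<phi> g) F)"
  proof (intro group_hom.intro group_hom_axioms.intro is_group group_BijGroup homI)
    show "restrict (\<phi> g) F \<in> carrier (BijGroup F)" if "g \<in> carrier G" for g
      using Bij that by (simp add: BijGroup_def)
    show "restrict (\<phi> (g \<otimes> h)) F
        = restrict (\<phi> g) F \<otimes>\<^bsub>BijGroup F\<^esub> restrict (\<phi> h) F"
      if "g \<in> carrier G" "h \<in> carrier G" for g h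
      using that Bij F assms(1) composition_rule
      by (auto simp: BijGroup_def compose_def restrict_def fun_eq_iff)
  qed
  then show ?thesis by (simp add: group_action_def)
qed

lemma (in group_action) card_singleton_orbits:
  "card {orb \<in> orbits G E \<phi>. card orb = 1} = card {x \<in> E. \<forall>g \<in> carrier G. \<phi> g x = x}"
proof -
  interpret group G using group_hom group_hom.axioms(1) by auto
  define Fix where "Fix = {x \<in> E. \<forall>g \<in> carrier G. \<phi> g x = x}"
  have orbit_singleton_iff: "orbit G \<phi> x = {x} \<longleftrightarrow> x \<in> Fix" if "x \<in> E" for x
    using orbit_refl[OF that] that by (auto simp: orbit_def Fix_def)
  have "{orb \<in> orbits G E \<phi>. card orb = 1} = (\<lambda>x. {x}) ` Fix"
  proof
    show "{orb \<in> orbits G E \<phi>. card orb = 1} \<subseteq> (\<lambda>x. {x}) ` Fix"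
    proof clarify
      fix orb assume orb: "orb \<in> orbits G E \<phi>" "card orb = 1"
      then obtain x where x: "x \<in> E" "orb = orbit G \<phi> x"
        by (auto simp: orbits_def)
      then have "orb = {x}"
        using orb(2) orbit_refl[OF x(1)] by (metis card_1_singletonE singletonD)
      then show "orb \<in> (\<lambda>x. {x}) ` Fix"
        using orbit_singleton_iff[OF x(1)] x(2) by blast
    qed
    show "(\<lambda>x. {x}) ` Fix \<subseteq> {orb \<in> orbits G E \<phi>. card orb = 1}"
      using orbit_singleton_iff by (force simp: orbits_def Fix_def)
  qed
  then show ?thesis by (simp add: card_image Fix_def)
qed

lemma (in group_action) card_fixed_points_mod:
  assumes "finite E" "order G = p ^ a" "Factorial_Ring.prime p"
  shows "card {x \<in> E. \<forall>g \<in> carrier G. \<phi> g x = x} mod p = card E mod p"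
proof -
  let ?O = "orbits G E \<phi>"
  have finite_O: "finite ?O"
    using assms(1) by (simp add: orbits_def)
  have orbit_mod: "card orb mod p = (if card orb = 1 then 1 else 0)" if orb: "orb \<in> ?O" for orb
  proof -
    obtain x where x: "x \<in> E" "orb = orbit G \<phi> x"
      using orb unfolding orbits_def by blast
    then have "card orb dvd p ^ a"
      using orbit_stabilizer_theorem[OF x(1)] assms(2) by (metis dvd_triv_left)
    then obtain b where "card orb = p ^ b"
      using divides_primepow_nat[OF assms(3)] by blast
    then show ?thesis
      using prime_gt_1_nat[OF assms(3)] by (cases b) auto
  qed
  have "card E mod p = (\<Sum>orb\<in>?O. card orb) mod p"
    using disjoint_sum[OF assms(1), of "\<lambda>_. 1 :: nat"] by (simp add: card_eq_sum[symmetric])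
  also have "\<dots> = (\<Sum>orb\<in>?O. card orb mod p) mod p"
    by (simp add: mod_sum_eq)
  also have "(\<Sum>orb\<in>?O. card orb mod p) = card {orb \<in> ?O. card orb = 1}"
    using finite_O by (simp add: orbit_mod sum.inter_filter[symmetric] cong: sum.cong)
  finally show ?thesis using card_singleton_orbits by simp
qed

lemma (in group) p_group_normal_meets_center:
  assumes "order G = p ^ a" "Factorial_Ring.prime p" "W \<lhd> G" "W \<noteq> {\<one>}"
  shows "\<exists>z \<in> W. z \<noteq> \<one> \<and> (\<forall>g \<in> carrier G. g \<otimes> z = z \<otimes> g)"
proof -
  interpret W: normal W G by fact
  let ?conj = "\<lambda>g. restrict (\<lambda>h \<in> carrier G. g \<otimes> h \<otimes> inv g) W"
  interpret conj: group_action G W ?conj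
    using group_action.restrict_action[OF action_by_conjugation W.subset] W.inv_op_closed2
    by simp
  define Fix where "Fix = {x \<in> W. \<forall>g \<in> carrier G. g \<otimes> x \<otimes> inv g = x}"
  have Fix_eq: "{x \<in> W. \<forall>g \<in> carrier G. ?conj g x = x} = Fix"
    using W.subset by (auto simp: Fix_def)
  have finite_G: "finite (carrier G)"
    using assms(1,2) prime_gt_0_nat by (metis order_def card_ge_0_finite zero_less_power)
  then have finite_W: "finite W"
    using W.subset finite_subset by blast
  obtain i where i: "card W = p ^ i"
    using lagrange[OF W.subgroup_axioms] assms(1) divides_primepow_nat[OF assms(2)]
    by (metis dvd_triv_right)
  have "card W \<noteq> 1"
    using assms(4) W.one_closed by (metis card_1_singletonE singletonD)
  then have "card W mod p = 0" using i by (cases i) auto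
  then have "p dvd card Fix"
    using conj.card_fixed_points_mod[OF finite_W assms(1,2)] unfolding Fix_eq
    by (simp add: dvd_eq_mod_eq_0)
  moreover have "\<one> \<in> Fix" by (simp add: Fix_def W.one_closed)
  moreover have "finite Fix" using finite_W by (simp add: Fix_def)
  ultimately have "card Fix \<ge> 2"
    using prime_ge_2_nat[OF assms(2)] by (metis card_0_eq dvd_imp_le empty_iff le_trans not_gr0)
  then have "Fix \<noteq> {\<one>}" by (intro notI) simp
  then obtain z where z: "z \<in> Fix" "z \<noteq> \<one>"
    using \<open>\<one> \<in> Fix\<close> by blast
  have "g \<otimes> z = z \<otimes> g" if g: "g \<in> carrier G" for g
  proof -
    have "z \<in> carrier G" "z = g \<otimes> z \<otimes> inv g"
      using z(1) g W.subset by (auto simp: Fix_def)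
    then show ?thesis using g inv_solve_right[of z "g \<otimes> z" g] by simp
  qed
  then show ?thesis using z by (auto simp: Fix_def)
qed

section \<open>Topological groups\<close>

lemma tube_lemma_continuous_map:
  assumes "compactin S K" "continuous_map (prod_topology S Y) Z f" "openin Z W"
    and "y \<in> topspace Y" "\<And>k. k \<in> K \<Longrightarrow> f (k, y) \<in> W"
  shows "\<exists>V. openin Y V \<and> y \<in> V \<and> (\<forall>k\<in>K. \<forall>v\<in>V. f (k, v) \<in> W)"
proof -
  let ?P = "{z \<in> topspace (prod_topology S Y). f z \<in> W}"
  have "openin (prod_topology S Y) ?P"
    using openin_continuous_map_preimage[OF assms(2,3)] .
  moreover have "K \<times> {y} \<subseteq> ?P"
    using assms(4,5) compactin_subset_topspace[OF assms(1)] by auto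
  ultimately obtain U V where "openin Y V" "K \<subseteq> U" "y \<in> V" "U \<times> V \<subseteq> ?P"
    using tube_lemma_left[OF _ assms(1,4)] by metis
  then show ?thesis by blast
qed

locale top_group = group G for G (structure) +
  fixes T :: "'a topology"
  assumes topological_group: "topological_group G T"
begin

lemma topspace_eq [simp]: "topspace T = carrier G"
  using topological_group by (simp add: topological_group_def)

lemma closedin_carrier: "closedin T (carrier G)"
  using closedin_topspace[of T] by simp

lemma continuous_map_mult_prod: "continuous_map (prod_topology T T) T (\<lambda>(x, y). x \<otimes> y)"
  using topological_group by (simp add: topological_group_def)

lemma continuous_map_mult:
  assumes "continuous_map S T f" "continuous_map S T g"
  shows "continuous_map S T (\<lambda>x. f x \<otimes> g x)"
proof -
  have "continuous_map S (prod_topology T T) (\<lambda>x. (f x, g x))"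
    using assms by (simp add: continuous_map_paired)
  from continuous_map_compose[OF this continuous_map_mult_prod] show ?thesis
    by (simp add: o_def)
qed

lemma continuous_map_inv:
  assumes "continuous_map S T f"
  shows "continuous_map S T (\<lambda>x. inv (f x))"
proof -
  have "continuous_map T T (\<lambda>x. inv x)"
    using topological_group by (simp add: topological_group_def)
  then show ?thesis
    using continuous_map_compose[OF assms] by (simp add: o_def)
qed

lemma continuous_map_ident: "continuous_map T T (\<lambda>x. x)"
  using continuous_map_id by (simp add: id_def)

lemma openin_l_coset:
  assumes "openin T U" "c \<in> carrier G"
  shows "openin T (c <# U)"
proof -
  have "continuous_map T T (\<lambda>x. inv c \<otimes> x)"
    using assms(2) by (intro continuous_map_mult continuous_map_ident) simp
  then have "openin T {x \<in> topspace T. inv c \<otimes> x \<in> U}"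
    using assms(1) by (rule openin_continuous_map_preimage)
  moreover have "{x \<in> topspace T. inv c \<otimes> x \<in> U} = c <# U"
  proof (intro equalityI subsetI)
    fix x assume "x \<in> {x \<in> topspace T. inv c \<otimes> x \<in> U}"
    then have "x = c \<otimes> (inv c \<otimes> x)" "inv c \<otimes> x \<in> U"
      using assms(2) by auto
    then show "x \<in> c <# U" unfolding l_coset_def by blast
  next
    fix x assume "x \<in> c <# U"
    then obtain u where "u \<in> U" "x = c \<otimes> u" unfolding l_coset_def by blast
    then show "x \<in> {x \<in> topspace T. inv c \<otimes> x \<in> U}"
      using assms(2) openin_subset[OF assms(1)] by auto
  qed
  ultimately show ?thesis by simp
qed

lemma openin_subgroup_if_contains_open:
  assumes "subgroup H G" "openin T U" "\<one> \<in> U" "U \<subseteq> H"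
  shows "openin T H"
proof -
  interpret H: subgroup H G by fact
  have "H = (\<Union>h\<in>H. h <# U)"
  proof
    show "H \<subseteq> (\<Union>h\<in>H. h <# U)"
      using assms(3) unfolding l_coset_def by (force intro: bexI[of _ \<one>])
    show "(\<Union>h\<in>H. h <# U) \<subseteq> H"
      using assms(4) unfolding l_coset_def by auto
  qed
  moreover have "openin T (\<Union>h\<in>H. h <# U)"
    using openin_l_coset[OF assms(2)] by auto
  ultimately show ?thesis by simp
qed

lemma closedin_open_subgroup:
  assumes "subgroup H G" "openin T H"
  shows "closedin T H"
proof -
  interpret H: subgroup H G by fact
  have "carrier G - H = (\<Union>x\<in>carrier G - H. x <# H)"
  proof
    show "carrier G - H \<subseteq> (\<Union>x\<in>carrier G - H. x <# H)"
      using H.one_closed by (force simp: l_coset_def intro: bexI[of _ \<one>])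
    show "(\<Union>x\<in>carrier G - H. x <# H) \<subseteq> carrier G - H"
    proof
      fix y assume "y \<in> (\<Union>x\<in>carrier G - H. x <# H)"
      then obtain x h where x: "x \<in> carrier G" "x \<notin> H" and h: "h \<in> H" "y = x \<otimes> h"
        unfolding l_coset_def by blast
      have "y \<notin> H"
      proof
        assume "y \<in> H"
        then have "y \<otimes> inv h \<in> H" using h by simp
        moreover have "y \<otimes> inv h = x" using x h by (simp add: m_assoc)
        ultimately show False using x by simp
      qed
      then show "y \<in> carrier G - H" using x h by simp
    qed
  qed
  moreover have "openin T (\<Union>x\<in>carrier G - H. x <# H)"
    using openin_l_coset[OF assms(2)] by auto
  ultimately show ?thesis
    using H.subset by (simp add: closedin_def)
qed

lemma subgroup_closure_of:
  assumes "subgroup H G"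
  shows "subgroup (T closure_of H) G"
proof -
  interpret H: subgroup H G by fact
  let ?C = "T closure_of H"
  have mult: "x \<otimes> y \<in> ?C" if "x \<in> ?C" "y \<in> ?C" for x y
  proof -
    have "(x, y) \<in> prod_topology T T closure_of (H \<times> H)"
      using that by (simp add: closure_of_Times)
    then have "x \<otimes> y \<in> T closure_of ((\<lambda>(x, y). x \<otimes> y) ` (H \<times> H))"
      using continuous_map_image_closure_subset[OF continuous_map_mult_prod] by blast
    moreover have "(\<lambda>(x, y). x \<otimes> y) ` (H \<times> H) \<subseteq> H" by auto
    ultimately show ?thesis using closure_of_mono by blast
  qed
  have inv: "inv x \<in> ?C" if "x \<in> ?C" for x
  proof -
    have "inv x \<in> T closure_of ((\<lambda>x. inv x) ` H)"
      using continuous_map_image_closure_subset[OF continuous_map_inv[OF continuous_map_ident]] that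
      by blast
    moreover have "(\<lambda>x. inv x) ` H \<subseteq> H" by auto
    ultimately show ?thesis using closure_of_mono by blast
  qed
  have "H \<subseteq> ?C" using closure_of_subset[of H T] H.subset by simp
  show ?thesis
  proof (rule subgroupI)
    show "?C \<subseteq> carrier G" using closure_of_subset_topspace[of T H] by simp
    show "?C \<noteq> {}" using \<open>H \<subseteq> ?C\<close> H.one_closed by blast
  qed (use mult inv in blast)+
qed

lemma normal_closure_of:
  assumes "H \<lhd> G"
  shows "T closure_of H \<lhd> G"
  unfolding normal_inv_iff
proof (intro conjI ballI)
  show "subgroup (T closure_of H) G"
    using subgroup_closure_of[OF normal_imp_subgroup[OF assms]] .
  fix g h assume g: "g \<in> carrier G" and h: "h \<in> T closure_of H"
  have "continuous_map T T (\<lambda>x. g \<otimes> x \<otimes> inv g)"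
    using g by (intro continuous_map_mult continuous_map_ident continuous_map_const[THEN iffD2]) simp_all
  then have "g \<otimes> h \<otimes> inv g \<in> T closure_of ((\<lambda>x. g \<otimes> x \<otimes> inv g) ` H)"
    using continuous_map_image_closure_subset h by blast
  moreover have "(\<lambda>x. g \<otimes> x \<otimes> inv g) ` H \<subseteq> H"
    using assms g by (auto simp: normal_inv_iff)
  ultimately show "g \<otimes> h \<otimes> inv g \<in> T closure_of H"
    using closure_of_mono by blast
qed

end

section \<open>The lower central series\<close>

abbreviation (in top_group) \<gamma> :: "nat \<Rightarrow> 'a set" where
  "\<gamma> \<equiv> lower_central G T"

context top_group
begin

lemma lower_central_cases:
  obtains "\<gamma> k = carrier G" | i where "k = Suc (Suc i)"
  by (metis lower_central.simps(1,2) not0_implies_Suc)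

lemma lower_central_normal: "\<gamma> k \<lhd> G"
proof (induction k rule: less_induct)
  case (less k)
  show ?case
  proof (cases k rule: lower_central_cases)
    case (2 i)
    then have "\<gamma> (Suc i) \<lhd> G" using less by simp
    then show ?thesis
      using 2 normal_generate_commutator_set[of "\<gamma> (Suc i)" "{}"]
      by (simp add: closed_commutator_eq normal_closure_of)
  qed (simp add: normal_self)
qed

lemma lower_central_subgroup: "subgroup (\<gamma> k) G"
  using lower_central_normal by (rule normal_imp_subgroup)

lemma lower_central_closed: "closedin T (\<gamma> k)"
  by (cases k rule: lower_central_cases) (simp_all add: closedin_carrier closed_commutator_eq)

lemma commutator_in_lower_central:
  assumes "a \<in> \<gamma> (Suc i)" "b \<in> carrier G"
  shows "commutator G a b \<in> \<gamma> (Suc (Suc i))"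
proof -
  let ?S = "commutator_set G (\<gamma> (Suc i)) (carrier G)"
  have "?S \<subseteq> carrier G"
    using commutator_set_subset_normal[OF lower_central_normal] lower_central_subgroup subgroup.subset
    by blast
  then have "generate G ?S \<subseteq> T closure_of generate G ?S"
    using closure_of_subset[of "generate G ?S" T] generate_incl by simp
  moreover have "commutator G a b \<in> generate G ?S"
    using assms by (auto simp: commutator_set_def intro: generate.incl)
  ultimately show ?thesis by (auto simp: closed_commutator_eq)
qed

lemma lower_central_Suc_subset: "\<gamma> (Suc k) \<subseteq> \<gamma> k"
proof (cases k)
  case (Suc i)
  have "generate G (commutator_set G (\<gamma> (Suc i)) (carrier G)) \<subseteq> \<gamma> (Suc i)"
    using commutator_set_subset_normal[OF lower_central_normal] lower_central_subgroup
    by (rule generate_subgroup_incl)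
  then show ?thesis
    using Suc closure_of_minimal[OF _ lower_central_closed] by (simp add: closed_commutator_eq)
qed simp

lemma lower_central_antimono: "i \<le> j \<Longrightarrow> \<gamma> j \<subseteq> \<gamma> i"
  by (induction j rule: dec_induct) (use lower_central_Suc_subset in blast)+

end

section \<open>Open normal subgroups of compact totally disconnected groups\<close>

lemma clopen_separating:
  assumes "compact_space S" "Hausdorff_space S" "totally_disconnected_space S"
    and "a \<in> topspace S" "b \<in> topspace S" "a \<noteq> b"
  obtains U where "openin S U" "closedin S U" "a \<in> U" "b \<notin> U"
proof -
  have "connected_component_of_set S a = {a}"
  proof
    show "connected_component_of_set S a \<subseteq> {a}"
      using assms(3) unfolding totally_disconnected_space_def by auto
    show "{a} \<subseteq> connected_component_of_set S a"
      using assms(4) by (simp add: connected_component_of_refl)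
  qed
  then have "{a} \<in> connected_components_of S"
    using assms(4) unfolding connected_components_of_def by blast
  moreover have "openin S (topspace S - {b})"
  proof -
    have "closedin S {b}"
      using Hausdorff_imp_t1_space[OF assms(2)] assms(5) by (simp add: t1_space_closedin_singleton)
    then show ?thesis by (simp add: closedin_def)
  qed
  moreover have "{a} \<subseteq> topspace S - {b}" using assms(4,6) by blast
  ultimately obtain U V where UV: "openin S U" "openin S V" "disjnt U V" "U \<union> V = topspace S"
      "{a} \<subseteq> U" "U \<subseteq> topspace S - {b}"
    using wilder_locally_compact_component_thm[OF compact_imp_locally_compact_space[OF assms(1)]
        assms(2) _ compactin_sing[THEN iffD2, OF assms(4)]] by blast
  then have "U = topspace S - V" by (auto simp: disjnt_def)
  then have "closedin S U" using UV(2) by (simp add: closedin_diff)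
  then show ?thesis using that UV(1,5,6) by blast
qed

context group
begin

lemma generate_subset_if_right_stable:
  assumes "\<one> \<in> U" "U \<subseteq> carrier G" "S \<subseteq> carrier G"
    and "\<And>u s. u \<in> U \<Longrightarrow> s \<in> S \<Longrightarrow> u \<otimes> s \<in> U"
    and "\<And>u s. u \<in> U \<Longrightarrow> s \<in> S \<Longrightarrow> u \<otimes> inv s \<in> U"
  shows "generate G S \<subseteq> U"
proof -
  have "u \<otimes> h \<in> U" if "h \<in> generate G S" "u \<in> U" for u h
    using that
  proof (induction arbitrary: u rule: generate.induct)
    case one
    then show ?case using assms(2) by auto
  next
    case (eng h1 h2)
    then have "h1 \<in> carrier G" "h2 \<in> carrier G"
      using generate_incl[OF assms(3)] by auto
    then show ?case using eng assms(2) by (auto simp: m_assoc[symmetric])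
  qed (use assms(4,5) in auto)
  then show ?thesis using assms(1) generate_incl[OF assms(3)] by fastforce
qed

lemma normal_generate_conjugates:
  assumes "V \<subseteq> carrier G"
  defines "S \<equiv> {g \<otimes> v \<otimes> inv g | g v. g \<in> carrier G \<and> v \<in> V}"
  shows "generate G S \<lhd> G" and "V \<subseteq> generate G S"
proof -
  have "S \<subseteq> carrier G" using assms(1) by (auto simp: S_def)
  then show "generate G S \<lhd> G"
  proof (rule normal_generateI)
    fix s h assume "s \<in> S" "h \<in> carrier G"
    then obtain g v where gv: "s = g \<otimes> v \<otimes> inv g" "g \<in> carrier G" "v \<in> V"
      unfolding S_def by blast
    then have "h \<otimes> s \<otimes> inv h = (h \<otimes> g) \<otimes> v \<otimes> inv (h \<otimes> g)"
      using \<open>h \<in> carrier G\<close> assms(1) by (auto simp: m_assoc inv_mult_group)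
    then show "h \<otimes> s \<otimes> inv h \<in> S" using gv \<open>h \<in> carrier G\<close> unfolding S_def by blast
  qed
  show "V \<subseteq> generate G S"
  proof
    fix v assume "v \<in> V"
    then have "v = \<one> \<otimes> v \<otimes> inv \<one>" using assms(1) by auto
    then show "v \<in> generate G S" unfolding S_def using \<open>v \<in> V\<close> by (blast intro: generate.incl)
  qed
qed

end

context top_group
begin

lemma conj_invariant_open_nbhd:
  assumes "compact_space T" "openin T W" "\<one> \<in> W"
  obtains V where "openin T V" "\<one> \<in> V"
    "\<And>g v. g \<in> carrier G \<Longrightarrow> v \<in> V \<Longrightarrow> g \<otimes> v \<otimes> inv g \<in> W"
proof -
  have conj: "continuous_map (prod_topology T T) T (\<lambda>z. fst z \<otimes> snd z \<otimes> inv (fst z))"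
    by (intro continuous_map_mult continuous_map_inv continuous_map_fst continuous_map_snd)
  obtain V where "openin T V" "\<one> \<in> V" "\<forall>g \<in> carrier G. \<forall>v \<in> V. g \<otimes> v \<otimes> inv g \<in> W"
    using tube_lemma_continuous_map[OF _ conj assms(2), where K = "carrier G" and y = \<one>]
      assms(1,3) by (auto simp: compact_space_def)
  then show ?thesis using that by blast
qed

lemma open_normal_subgroup_in_clopen:
  assumes "compact_space T" "openin T U" "closedin T U" "\<one> \<in> U"
  obtains H where "H \<lhd> G" "openin T H" "H \<subseteq> U"
proof -
  have U: "U \<subseteq> carrier G" using openin_subset[OF assms(2)] by simp
  obtain V1 where V1: "openin T V1" "\<one> \<in> V1" "\<And>u v. u \<in> U \<Longrightarrow> v \<in> V1 \<Longrightarrow> u \<otimes> v \<in> U"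
    using tube_lemma_continuous_map[OF closedin_compact_space[OF assms(1,3)]
        continuous_map_mult_prod assms(2), of \<one>] U by (auto simp: subset_eq)
  define V0 where "V0 = {v \<in> V1. inv v \<in> V1}"
  have "V1 \<inter> {v \<in> topspace T. inv v \<in> V1} = V0"
    using openin_subset[OF V1(1)] by (auto simp: V0_def)
  moreover have "openin T {v \<in> topspace T. inv v \<in> V1}"
    using openin_continuous_map_preimage[OF continuous_map_inv[OF continuous_map_ident] V1(1)] .
  ultimately have "openin T V0" using V1(1) by blast
  moreover have "\<one> \<in> V0" using V1(2) by (simp add: V0_def)
  ultimately obtain V where V: "openin T V" "\<one> \<in> V"
      "\<And>g v. g \<in> carrier G \<Longrightarrow> v \<in> V \<Longrightarrow> g \<otimes> v \<otimes> inv g \<in> V0"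
    using conj_invariant_open_nbhd[OF assms(1)] by blast
  have V_carrier: "V \<subseteq> carrier G" using openin_subset[OF V(1)] by simp
  define S where "S = {g \<otimes> v \<otimes> inv g | g v. g \<in> carrier G \<and> v \<in> V}"
  have "S \<subseteq> V0" using V(3) by (auto simp: S_def)
  have H: "generate G S \<lhd> G" "V \<subseteq> generate G S"
    using normal_generate_conjugates[OF V_carrier] by (simp_all add: S_def)
  have "generate G S \<subseteq> U"
    using \<open>S \<subseteq> V0\<close> V1(3) assms(4) U V_carrier
    by (intro generate_subset_if_right_stable) (auto simp: S_def V0_def)
  moreover have "openin T (generate G S)"
    using openin_subgroup_if_contains_open[OF normal_imp_subgroup[OF H(1)] V(1,2) H(2)] .
  ultimately show ?thesis using that H(1) by blast
qed

lemma open_normal_subgroup_avoiding: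
  assumes "compact_space T" "Hausdorff_space T" "totally_disconnected_space T"
    and "x \<in> carrier G" "x \<noteq> \<one>"
  obtains N where "N \<lhd> G" "openin T N" "x \<notin> N"
proof -
  obtain U where "openin T U" "closedin T U" "\<one> \<in> U" "x \<notin> U"
    using clopen_separating[OF assms(1-3), of \<one> x] assms(4,5) by auto
  then show ?thesis
    using open_normal_subgroup_in_clopen[OF assms(1)] that by blast
qed

end

section \<open>Automorphisms acting trivially on the abelianisation\<close>

lemma (in group) displacement_mult:
  assumes "\<phi> \<in> hom G G" "x \<in> carrier G" "y \<in> carrier G"
  shows "inv (x \<otimes> y) \<otimes> \<phi> (x \<otimes> y)
    = (inv x \<otimes> \<phi> x) \<otimes> commutator G (inv x \<otimes> \<phi> x) y \<otimes> (inv y \<otimes> \<phi> y)"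
proof -
  interpret \<phi>: group_hom G G \<phi>
    using assms(1) by (simp add: group_hom_def group_hom_axioms_def is_group)
  show ?thesis
    using assms(2,3) by (simp add: commutator_def m_assoc inv_mult_group)
qed

context normal
begin

lemma r_coset_closed_Mod: "a \<in> carrier G \<Longrightarrow> H #> a \<in> carrier (G Mod H)"
  using hom_in_carrier[OF r_coset_hom_Mod] .

lemma displacement_hom_Mod:
  assumes "\<phi> \<in> hom G G"
    and central: "\<And>x. x \<in> carrier G \<Longrightarrow> inv x \<otimes> \<phi> x \<in> central_mod G H"
  shows "(\<lambda>x. H #> (inv x \<otimes> \<phi> x)) \<in> hom G (G Mod H)"
proof (rule homI)
  interpret Q: group "G Mod H" by (rule factorgroup_is_group)
  have \<phi>: "\<phi> x \<in> carrier G" if "x \<in> carrier G" for x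
    using hom_in_carrier[OF assms(1) that] .
  show "H #> (inv x \<otimes> \<phi> x) \<in> carrier (G Mod H)" if "x \<in> carrier G" for x
    using that \<phi> by (simp add: r_coset_closed_Mod)
  fix x y assume x: "x \<in> carrier G" and y: "y \<in> carrier G"
  let ?d = "inv x \<otimes> \<phi> x" and ?e = "inv y \<otimes> \<phi> y"
  let ?c = "commutator G ?d y"
  have "?c \<in> H"
    using central[OF x] y by (simp add: central_mod_def)
  then have c: "H #> ?c = \<one>\<^bsub>G Mod H\<^esub>"
    using r_coset_eq_self_iff x y \<phi> by simp
  have "H #> (inv (x \<otimes> y) \<otimes> \<phi> (x \<otimes> y)) = H #> (?d \<otimes> ?c \<otimes> ?e)"
    by (simp only: displacement_mult[OF assms(1) x y])
  also have "\<dots> = (H #> ?d) \<otimes>\<^bsub>G Mod H\<^esub> (H #> ?c) \<otimes>\<^bsub>G Mod H\<^esub> (H #> ?e)"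
    using x y \<phi> by (simp add: rcos_sum)
  also have "\<dots> = (H #> ?d) \<otimes>\<^bsub>G Mod H\<^esub> (H #> ?e)"
    unfolding c using x y \<phi>
    by (simp del: mult_FactGroup one_FactGroup add: r_coset_closed_Mod)
  finally show "H #> (inv (x \<otimes> y) \<otimes> \<phi> (x \<otimes> y)) = (H #> ?d) \<otimes>\<^bsub>G Mod H\<^esub> (H #> ?e)" .
qed

lemma displacement_Mod_comp:
  assumes "\<phi> \<in> hom G G"
    and central: "\<And>x. x \<in> carrier G \<Longrightarrow> inv x \<otimes> \<phi> x \<in> central_mod G H"
    and second: "inv (inv y \<otimes> \<phi> y) \<otimes> \<phi> (inv y \<otimes> \<phi> y) \<in> H"
    and y: "y \<in> carrier G"
  shows "H #> (inv (\<phi> y) \<otimes> \<phi> (\<phi> y)) = H #> (inv y \<otimes> \<phi> y)"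
proof -
  interpret Q: group "G Mod H" by (rule factorgroup_is_group)
  define D where "D = (\<lambda>x. H #> (inv x \<otimes> \<phi> x))"
  interpret D: group_hom G "G Mod H" D
    using displacement_hom_Mod[OF assms(1) central]
    by (simp add: group_hom_def group_hom_axioms_def is_group Q.is_group D_def)
  have \<phi>: "\<phi> y \<in> carrier G" using hom_in_carrier[OF assms(1) y] .
  have "D (inv y \<otimes> \<phi> y) = \<one>\<^bsub>G Mod H\<^esub>"
    unfolding D_def using second r_coset_eq_self_iff y \<phi> by simp
  moreover have "D (y \<otimes> (inv y \<otimes> \<phi> y)) = D y \<otimes>\<^bsub>G Mod H\<^esub> D (inv y \<otimes> \<phi> y)"
    using y \<phi> by (intro D.hom_mult) simp_all
  ultimately have "D (y \<otimes> (inv y \<otimes> \<phi> y)) = D y"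
    using y by (simp del: mult_FactGroup one_FactGroup)
  then show ?thesis using y \<phi> by (simp add: D_def)
qed

lemma r_coset_iterate_displacement:
  assumes "\<phi> \<in> hom G G"
    and central: "\<And>x. x \<in> carrier G \<Longrightarrow> inv x \<otimes> \<phi> x \<in> central_mod G H"
    and second: "\<And>x. x \<in> carrier G \<Longrightarrow> inv (inv x \<otimes> \<phi> x) \<otimes> \<phi> (inv x \<otimes> \<phi> x) \<in> H"
    and x: "x \<in> carrier G"
  shows "H #> (\<phi> ^^ j) x = (H #> x) \<otimes>\<^bsub>G Mod H\<^esub> (H #> (inv x \<otimes> \<phi> x)) [^]\<^bsub>G Mod H\<^esub> j"
proof -
  interpret Q: group "G Mod H" by (rule factorgroup_is_group)
  let ?D = "H #> (inv x \<otimes> \<phi> x)"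
  have \<phi>: "\<phi> y \<in> carrier G" if "y \<in> carrier G" for y
    using hom_in_carrier[OF assms(1) that] .
  have \<phi>_pow: "(\<phi> ^^ j) x \<in> carrier G" for j
    using x \<phi> by (induction j) auto
  have D_closed: "?D \<in> carrier (G Mod H)"
    using x \<phi> by (simp add: r_coset_closed_Mod)
  have D_iterate: "H #> (inv ((\<phi> ^^ j) x) \<otimes> \<phi> ((\<phi> ^^ j) x)) = ?D" for j
  proof (induction j)
    case (Suc j)
    then show ?case
      using displacement_Mod_comp[OF assms(1) central second \<phi>_pow[of j]] \<phi>_pow[of j] by simp
  qed simp
  show ?thesis
  proof (induction j)
    case 0
    show ?case
      using x D_closed by (simp del: mult_FactGroup one_FactGroup add: r_coset_closed_Mod)
  next
    case (Suc j)
    have "H #> (\<phi> ^^ Suc j) x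
        = (H #> (\<phi> ^^ j) x) \<otimes>\<^bsub>G Mod H\<^esub> (H #> (inv ((\<phi> ^^ j) x) \<otimes> \<phi> ((\<phi> ^^ j) x)))"
      using \<phi>_pow[of j] \<phi>[OF \<phi>_pow[of j]] by (simp add: rcos_sum)
    also have "\<dots> = ((H #> x) \<otimes>\<^bsub>G Mod H\<^esub> ?D [^]\<^bsub>G Mod H\<^esub> j) \<otimes>\<^bsub>G Mod H\<^esub> ?D"
      by (simp only: Suc.IH D_iterate)
    also have "\<dots> = (H #> x) \<otimes>\<^bsub>G Mod H\<^esub> ?D [^]\<^bsub>G Mod H\<^esub> Suc j"
      using Q.m_assoc[OF r_coset_closed_Mod[OF x] Q.nat_pow_closed[OF D_closed] D_closed]
      by (simp del: mult_FactGroup one_FactGroup add: Q.nat_pow_Suc)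
    finally show ?case .
  qed
qed

lemma pow_displacement_mem:
  fixes n :: nat
  assumes "\<phi> \<in> hom G G"
    and central: "\<And>x. x \<in> carrier G \<Longrightarrow> inv x \<otimes> \<phi> x \<in> central_mod G H"
    and second: "\<And>x. x \<in> carrier G \<Longrightarrow> inv (inv x \<otimes> \<phi> x) \<otimes> \<phi> (inv x \<otimes> \<phi> x) \<in> H"
    and "(\<phi> ^^ n) x = x" "x \<in> carrier G"
  shows "(inv x \<otimes> \<phi> x) [^] n \<in> H"
proof -
  interpret Q: group "G Mod H" by (rule factorgroup_is_group)
  have \<phi>: "\<phi> x \<in> carrier G" using hom_in_carrier[OF assms(1,5)] .
  have "(H #> x) \<otimes>\<^bsub>G Mod H\<^esub> (H #> (inv x \<otimes> \<phi> x)) [^]\<^bsub>G Mod H\<^esub> n = H #> x"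
    using r_coset_iterate_displacement[OF assms(1) central second assms(5), of n] assms(4) by simp
  then have "(H #> (inv x \<otimes> \<phi> x)) [^]\<^bsub>G Mod H\<^esub> n = \<one>\<^bsub>G Mod H\<^esub>"
    using Q.l_cancel_one[OF r_coset_closed_Mod[OF assms(5)]
        Q.nat_pow_closed[OF r_coset_closed_Mod[of "inv x \<otimes> \<phi> x"]]] assms(5) \<phi>
    by simp
  moreover have "(H #> (inv x \<otimes> \<phi> x)) [^]\<^bsub>G Mod H\<^esub> n = H #> ((inv x \<otimes> \<phi> x) [^] n)"
    using hom_nat_pow[OF r_coset_hom_Mod _ is_group Q.is_group] assms(5) \<phi> by simp
  ultimately show ?thesis
    using r_coset_eq_self_iff assms(5) \<phi> by simp
qed

end

context top_group
begin

lemma displacement_trivial_on_derived_Mod: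
  assumes "N \<lhd> G" "closedin T N" "\<phi> \<in> hom G G" "continuous_map T T \<phi>"
    and central: "\<And>x. x \<in> carrier G \<Longrightarrow> inv x \<otimes> \<phi> x \<in> central_mod G N"
    and c: "c \<in> \<gamma> (Suc (Suc 0))"
  shows "inv c \<otimes> \<phi> c \<in> N"
proof -
  interpret N: normal N G by fact
  define D where "D = (\<lambda>x. N #> (inv x \<otimes> \<phi> x))"
  interpret D: group_hom G "G Mod N" D
    using N.displacement_hom_Mod[OF assms(3) central] N.factorgroup_is_group
    by (simp add: group_hom_def group_hom_axioms_def is_group D_def)
  have \<phi>: "\<phi> x \<in> carrier G" if "x \<in> carrier G" for x
    using assms(3) that by (simp add: hom_def Pi_def)
  have kernel_D: "kernel G (G Mod N) D = {x \<in> carrier G. inv x \<otimes> \<phi> x \<in> N}"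
    by (simp add: kernel_def D_def N.r_coset_eq_self_iff \<phi> cong: conj_cong)
  have "commutator G a b \<in> kernel G (G Mod N) D" if "a \<in> carrier G" "b \<in> carrier G" for a b
  proof -
    have "commutator G (inv a \<otimes> \<phi> a) (inv b \<otimes> \<phi> b) \<in> N"
      using central[OF that(1)] that(2) \<phi> by (simp add: central_mod_def)
    then have "D a \<otimes>\<^bsub>G Mod N\<^esub> D b = D b \<otimes>\<^bsub>G Mod N\<^esub> D a"
      using N.commute_Mod_iff that \<phi> by (simp add: D_def)
    then have "D (commutator G a b) = \<one>\<^bsub>G Mod N\<^esub>"
      using that D.hom_commutator D.H.commutator_eq_one_iff by simp
    then show ?thesis using that by (simp add: kernel_def)
  qed
  then have "generate G (commutator_set G (carrier G) (carrier G)) \<subseteq> kernel G (G Mod N) D"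
    by (intro generate_subgroup_incl[OF _ D.subgroup_kernel]) (auto simp: commutator_set_def)
  moreover have "continuous_map T T (\<lambda>x. inv x \<otimes> \<phi> x)"
    by (intro continuous_map_mult continuous_map_inv continuous_map_ident assms(4))
  then have "closedin T {x \<in> topspace T. inv x \<otimes> \<phi> x \<in> N}"
    using assms(2) by (rule closedin_continuous_map_preimage)
  ultimately have "\<gamma> (Suc (Suc 0)) \<subseteq> {x \<in> topspace T. inv x \<otimes> \<phi> x \<in> N}"
    unfolding kernel_D by (simp add: closed_commutator_eq closure_of_minimal)
  then show ?thesis using c by blast
qed

end

lemma (in top_group) displacement_in_lower_central:
  fixes n :: nat
  assumes "\<phi> \<in> hom G G" "continuous_map T T \<phi>"
    and "n > 0" "\<And>x. x \<in> carrier G \<Longrightarrow> (\<phi> ^^ n) x = x"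
    and derived: "\<And>x. x \<in> carrier G \<Longrightarrow> inv x \<otimes> \<phi> x \<in> \<gamma> (Suc (Suc 0))"
    and tf: "\<And>i. i \<ge> 1 \<Longrightarrow> torsion_free_group ((G\<lparr>carrier := \<gamma> i\<rparr>) Mod \<gamma> (Suc i))"
    and "x \<in> carrier G"
  shows "inv x \<otimes> \<phi> x \<in> \<gamma> k"
proof -
  have \<phi>: "\<phi> y \<in> carrier G" if "y \<in> carrier G" for y
    using hom_in_carrier[OF assms(1) that] .
  have "inv y \<otimes> \<phi> y \<in> \<gamma> (Suc (Suc k))" if "y \<in> carrier G" for y
    using that
  proof (induction k arbitrary: y)
    case 0
    then show ?case using derived by blast
  next
    case (Suc k)
    let ?N = "\<gamma> (Suc (Suc (Suc k)))"
    interpret N: normal ?N G by (rule lower_central_normal)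
    have central: "inv z \<otimes> \<phi> z \<in> central_mod G ?N" if "z \<in> carrier G" for z
      using Suc.IH[OF that] commutator_in_lower_central that \<phi>
      by (simp add: central_mod_def del: lower_central.simps)
    have "(inv y \<otimes> \<phi> y) [^] n \<in> ?N"
    proof (rule N.pow_displacement_mem[OF assms(1) central _ assms(4)[OF Suc.prems] Suc.prems])
      fix z assume "z \<in> carrier G"
      then show "inv (inv z \<otimes> \<phi> z) \<otimes> \<phi> (inv z \<otimes> \<phi> z) \<in> ?N"
        using displacement_trivial_on_derived_Mod[OF lower_central_normal lower_central_closed
            assms(1,2) central derived] \<phi> by simp
    qed
    then show ?case
      using N.mem_if_pow_mem_torsion_free[OF tf[of "Suc (Suc k)"] lower_central_Suc_subset
          subgroup.subset[OF lower_central_subgroup] Suc.IH[OF Suc.prems] _ assms(3)]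
      by simp
  qed
  then show ?thesis
    using lower_central_antimono[of k "Suc (Suc k)"] assms(7) by auto
qed

section \<open>Pro-\<open>p\<close> groups\<close>

lemma (in group) central_mod_extension:
  assumes "K \<lhd> G" "z \<in> central_mod G K"
  shows "generate G (K \<union> (z <# K)) \<lhd> G" and "generate G (K \<union> (z <# K)) \<subseteq> central_mod G K"
    and "insert z K \<subseteq> generate G (K \<union> (z <# K))"
proof -
  interpret K: normal K G by fact
  have zG: "z \<in> carrier G" using assms(2) by (simp add: central_mod_def)
  have S_carrier: "K \<union> (z <# K) \<subseteq> carrier G"
    using K.subset zG by (auto simp: l_coset_def)
  show "generate G (K \<union> (z <# K)) \<lhd> G"
  proof (rule normal_generateI[OF S_carrier])
    fix h g assume h: "h \<in> K \<union> (z <# K)" and g: "g \<in> carrier G"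
    show "g \<otimes> h \<otimes> inv g \<in> K \<union> (z <# K)"
    proof (cases "h \<in> K")
      case True
      then show ?thesis using K.inv_op_closed2[OF g] by simp
    next
      case False
      then obtain k where k: "k \<in> K" "h = z \<otimes> k" using h by (auto simp: l_coset_def)
      then have "g \<otimes> h \<otimes> inv g = z \<otimes> (commutator G z (inv g) \<otimes> (g \<otimes> k \<otimes> inv g))"
        using zG g K.subset by (auto simp: commutator_def m_assoc)
      moreover have "commutator G z (inv g) \<otimes> (g \<otimes> k \<otimes> inv g) \<in> K"
        using assms(2) g K.inv_op_closed2[OF g k(1)] by (simp add: central_mod_def)
      ultimately show ?thesis by (auto simp: l_coset_def)
    qed
  qed
  have "K \<union> (z <# K) \<subseteq> central_mod G K"
    using normal_subset_central_mod[OF assms(1)] assms(2)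
      subgroup.m_closed[OF subgroup_central_mod[OF assms(1)]]
    by (auto simp: l_coset_def)
  then show "generate G (K \<union> (z <# K)) \<subseteq> central_mod G K"
    by (rule generate_subgroup_incl[OF _ subgroup_central_mod[OF assms(1)]])
  have "z \<in> z <# K"
    unfolding l_coset_def using zG K.one_closed by (auto intro!: bexI[of _ \<one>])
  then show "insert z K \<subseteq> generate G (K \<union> (z <# K))"
    by (blast intro: generate.incl)
qed

locale pro_p = top_group +
  fixes p :: nat
  assumes pro_p_group: "pro_p_group p G T"
begin

lemma index_open_normal:
  assumes "N \<lhd> G" "openin T N"
  obtains k where "card (rcosets N) = p ^ k"
  using pro_p_group assms by (auto simp: pro_p_group_def)

lemma finite_rcosets_open_normal:
  assumes "N \<lhd> G" "openin T N"
  shows "finite (rcosets N)"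
proof -
  obtain k where "card (rcosets N) = p ^ k" using index_open_normal assms .
  moreover have "p > 0" using pro_p_group prime_gt_0_nat by (simp add: pro_p_group_def)
  ultimately have "card (rcosets N) > 0" by simp
  then show ?thesis by (rule card_ge_0_finite)
qed

lemma central_mod_nontrivial:
  assumes "N \<lhd> G" "openin T N" "K \<lhd> G" "N \<subseteq> K" "M \<lhd> G" "K \<subseteq> M" "\<not> M \<subseteq> K"
  shows "\<exists>z \<in> M. z \<notin> K \<and> z \<in> central_mod G K"
proof -
  interpret K: normal K G by fact
  interpret M: normal M G by fact
  interpret \<pi>: group_hom G "G Mod K" "(#>) K" by (rule K.group_hom_r_coset_Mod)
  have "openin T K"
    using openin_subgroup_if_contains_open[OF K.subgroup_axioms assms(2)]
      normal_imp_subgroup[OF assms(1)] subgroup.one_closed assms(4) by blast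
  then obtain a where "card (rcosets K) = p ^ a"
    using index_open_normal[OF assms(3)] by blast
  then have order: "order (G Mod K) = p ^ a" by (simp add: order_def FactGroup_def)
  have W: "(#>) K ` M \<lhd> G Mod K"
    using M.surj_hom_normal_subgroup[OF \<pi>.group_hom_axioms] by (simp add: carrier_FactGroup)
  obtain m where "m \<in> M" "m \<notin> K" using assms(7) by blast
  then have "K #> m \<noteq> K" "K #> m \<in> (#>) K ` M"
    using K.r_coset_eq_self_iff M.subset by auto
  then have "(#>) K ` M \<noteq> {\<one>\<^bsub>G Mod K\<^esub>}" by auto
  then obtain w where w: "w \<in> (#>) K ` M" "w \<noteq> \<one>\<^bsub>G Mod K\<^esub>"
      "\<forall>q \<in> carrier (G Mod K). q \<otimes>\<^bsub>G Mod K\<^esub> w = w \<otimes>\<^bsub>G Mod K\<^esub> q"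
    using \<pi>.H.p_group_normal_meets_center[OF order _ W] pro_p_group
    by (auto simp: pro_p_group_def)
  then obtain z where z: "z \<in> M" "w = K #> z" by blast
  then have zG: "z \<in> carrier G" using M.subset by blast
  have "z \<notin> K" using w(2) z K.r_coset_eq_self_iff[OF zG] by simp
  moreover have "commutator G z g \<in> K" if "g \<in> carrier G" for g
    using w(3) K.commute_Mod_iff[OF zG that] K.r_coset_closed_Mod[OF that] z(2) by metis
  ultimately show ?thesis using z zG by (auto simp: central_mod_def)
qed

lemma card_rcoset_image_mono:
  assumes "N \<lhd> G" "openin T N" "A \<subseteq> B" "B \<subseteq> carrier G"
  shows "card ((#>) N ` A) \<le> card ((#>) N ` B)"
proof -
  have "(#>) N ` B \<subseteq> rcosets N" using assms(4) unfolding RCOSETS_def by blast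
  then have "finite ((#>) N ` B)"
    using finite_rcosets_open_normal[OF assms(1,2)] finite_subset by blast
  then show ?thesis using assms(3) by (intro card_mono) auto
qed

lemma card_rcoset_image_less:
  assumes "N \<lhd> G" "openin T N" "subgroup A G" "N \<subseteq> A" "A \<subseteq> B" "B \<subseteq> carrier G"
    and "z \<in> B" "z \<notin> A"
  shows "card ((#>) N ` A) < card ((#>) N ` B)"
proof -
  interpret N: normal N G by fact
  have "(#>) N ` B \<subseteq> rcosets N" using assms(6) unfolding RCOSETS_def by blast
  then have fin: "finite ((#>) N ` B)"
    using finite_rcosets_open_normal[OF assms(1,2)] finite_subset by blast
  have zG: "z \<in> carrier G" using assms(6,7) by blast
  have "N #> z \<notin> (#>) N ` A"
  proof
    assume "N #> z \<in> (#>) N ` A"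
    then obtain a where a: "a \<in> A" "N #> z = N #> a" by blast
    then have "z \<in> N #> a" using rcos_self[OF zG N.subgroup_axioms] by simp
    then obtain n where "n \<in> N" "z = n \<otimes> a" unfolding r_coset_def by blast
    then have "z \<in> A" using a(1) assms(4) subgroup.m_closed[OF assms(3)] by blast
    then show False using assms(8) by simp
  qed
  then have "(#>) N ` A \<subset> (#>) N ` B" using assms(5,7) by blast
  then show ?thesis using fin by (rule psubset_card_mono[rotated])
qed

text \<open>
  If \<open>M \<not>\<subseteq> K\<close>, enlarge \<open>K\<close> by an element of \<open>M\<close> that is central modulo \<open>K\<close>. The hypothesis
  persists, so by induction on the number of cosets of \<open>N\<close> the enlarged group \<open>K'\<close> contains
  \<open>M\<close>; as \<open>K'\<close> is central modulo \<open>K\<close>, this forces \<open>[M,G] \<subseteq> K\<close> and hence \<open>M \<subseteq> K\<close>.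
\<close>
lemma subset_if_generated_by_commutators:
  assumes N: "N \<lhd> G" "openin T N"
  shows "K \<lhd> G \<Longrightarrow> N \<subseteq> K \<Longrightarrow> M \<lhd> G \<Longrightarrow> K \<subseteq> M
    \<Longrightarrow> M \<subseteq> generate G (commutator_set G M (carrier G) \<union> K) \<Longrightarrow> M \<subseteq> K"
proof (induction "card ((#>) N ` M) - card ((#>) N ` K)" arbitrary: K rule: less_induct)
  case less
  note K = less.prems(1,2) and M = less.prems(3,4) and gen = less.prems(5)
  interpret K: normal K G by (rule K(1))
  interpret M: normal M G by (rule M(1))
  show "M \<subseteq> K"
  proof (rule ccontr)
    assume "\<not> M \<subseteq> K"
    then obtain z where z: "z \<in> M" "z \<notin> K" "z \<in> central_mod G K"
      using central_mod_nontrivial[OF N K M] by blast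
    define K' where "K' = generate G (K \<union> (z <# K))"
    have K': "K' \<lhd> G" "K' \<subseteq> central_mod G K" "insert z K \<subseteq> K'"
      unfolding K'_def using central_mod_extension[OF K(1) z(3)] by simp_all
    then have "K \<subseteq> K'" "z \<in> K'" by auto
    have "z <# K \<subseteq> M"
      unfolding l_coset_def using z(1) M(2) M.m_closed by blast
    then have "K' \<subseteq> M"
      unfolding K'_def using M(2) by (intro generate_subgroup_incl[OF _ M.subgroup_axioms]) simp
    have "K' \<subseteq> carrier G"
      using normal_imp_subgroup[OF K'(1)] subgroup.subset by blast
    then have "card ((#>) N ` K) < card ((#>) N ` K')"
      using card_rcoset_image_less[OF N K.subgroup_axioms K(2) \<open>K \<subseteq> K'\<close> _ \<open>z \<in> K'\<close> z(2)]
      by blast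
    moreover have "card ((#>) N ` K') \<le> card ((#>) N ` M)"
      using card_rcoset_image_mono[OF N \<open>K' \<subseteq> M\<close> M.subset] .
    ultimately have measure:
      "card ((#>) N ` M) - card ((#>) N ` K') < card ((#>) N ` M) - card ((#>) N ` K)"
      by linarith
    have "generate G (commutator_set G M (carrier G) \<union> K)
        \<subseteq> generate G (commutator_set G M (carrier G) \<union> K')"
      using \<open>K \<subseteq> K'\<close> by (intro mono_generate) blast
    then have "M \<subseteq> generate G (commutator_set G M (carrier G) \<union> K')"
      using gen by (rule subset_trans[rotated])
    then have "M \<subseteq> K'"
      using less.hyps[OF measure K'(1) _ M(1) \<open>K' \<subseteq> M\<close>] K(2) \<open>K \<subseteq> K'\<close> by blast
    then have "commutator_set G M (carrier G) \<subseteq> K"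
      using K'(2) by (auto simp: commutator_set_def central_mod_def)
    then have "generate G (commutator_set G M (carrier G) \<union> K) \<subseteq> K"
      by (intro generate_subgroup_incl[OF _ K.subgroup_axioms]) auto
    then show False using gen \<open>\<not> M \<subseteq> K\<close> by blast
  qed
qed

text \<open>
  Descend through \<open>M \<supseteq> [M,G]N \<supseteq> \<dots>\<close>: each step is proper until \<open>N\<close> is reached, and the
  subgroup \<open>[M,G]N\<close> is open, hence closed, so it contains the closure of the next commutator term.
\<close>
lemma lower_central_subset_open_normal_from:
  assumes N: "N \<lhd> G" "openin T N"
  shows "M \<lhd> G \<Longrightarrow> N \<subseteq> M \<Longrightarrow> \<gamma> (Suc j) \<subseteq> M \<Longrightarrow> \<exists>m. \<gamma> m \<subseteq> N"
proof (induction "card ((#>) N ` M)" arbitrary: M j rule: less_induct)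
  case less
  note M = less.prems(1,2) and \<gamma>_M = less.prems(3)
  interpret M: normal M G by (rule M(1))
  interpret N: normal N G by (rule N(1))
  show ?case
  proof (cases "M \<subseteq> N")
    case True
    then show ?thesis using \<gamma>_M by blast
  next
    case False
    define F where "F = generate G (commutator_set G M (carrier G) \<union> N)"
    have "F \<lhd> G"
      unfolding F_def using normal_generate_commutator_set[OF M(1) N.subset] N.inv_op_closed2
      by blast
    then have F: "subgroup F G" by (rule normal_imp_subgroup)
    have "N \<subseteq> F" unfolding F_def by (blast intro: generate.incl)
    have "F \<subseteq> M"
      unfolding F_def using commutator_set_subset_normal[OF M(1)] M(2)
      by (intro generate_subgroup_incl[OF _ M.subgroup_axioms]) blast
    have "\<not> M \<subseteq> F"
      using subset_if_generated_by_commutators[OF N N(1) order.refl M] False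
      unfolding F_def by blast
    then obtain z where "z \<in> M" "z \<notin> F" by blast
    then have lt: "card ((#>) N ` F) < card ((#>) N ` M)"
      using card_rcoset_image_less[OF N F \<open>N \<subseteq> F\<close> \<open>F \<subseteq> M\<close> M.subset] by blast
    have "openin T F"
      using openin_subgroup_if_contains_open[OF F N(2) N.one_closed \<open>N \<subseteq> F\<close>] .
    have "commutator_set G (\<gamma> (Suc j)) (carrier G) \<subseteq> commutator_set G M (carrier G)"
      using \<gamma>_M by (auto simp: commutator_set_def)
    then have "generate G (commutator_set G (\<gamma> (Suc j)) (carrier G)) \<subseteq> F"
      unfolding F_def by (intro generate_subgroup_incl[OF _ F[unfolded F_def]])
        (blast intro: generate.incl)
    then have "\<gamma> (Suc (Suc j)) \<subseteq> F"
      using closure_of_minimal[OF _ closedin_open_subgroup[OF F \<open>openin T F\<close>]]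
      by (simp add: closed_commutator_eq)
    then show ?thesis using less.hyps[OF lt \<open>F \<lhd> G\<close> \<open>N \<subseteq> F\<close>] by blast
  qed
qed

lemma lower_central_subset_open_normal:
  assumes "N \<lhd> G" "openin T N"
  obtains m where "\<gamma> m \<subseteq> N"
  using lower_central_subset_open_normal_from[OF assms normal_self, of 0]
    subgroup.subset[OF normal_imp_subgroup[OF assms(1)]] that by auto

lemma lower_central_Inter_trivial:
  assumes "x \<in> carrier G" "\<And>k. x \<in> \<gamma> k"
  shows "x = \<one>"
proof (rule ccontr)
  assume "x \<noteq> \<one>"
  moreover have "compact_space T" "Hausdorff_space T" "totally_disconnected_space T"
    using pro_p_group by (simp_all add: pro_p_group_def profinite_group_def)
  ultimately obtain N where "N \<lhd> G" "openin T N" "x \<notin> N"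
    using open_normal_subgroup_avoiding assms(1) by metis
  moreover obtain m where "\<gamma> m \<subseteq> N"
    using lower_central_subset_open_normal[OF \<open>N \<lhd> G\<close> \<open>openin T N\<close>] .
  ultimately show False using assms(2) by blast
qed

end

lemma pro_p_group_imp_pro_p: "pro_p_group p G T \<Longrightarrow> pro_p G T p"
  by (simp add: pro_p_def top_group_def top_group_axioms_def pro_p_axioms_def pro_p_group_def
      profinite_group_def topological_group_def)

theorem lemma6p1:
  fixes p :: nat and G :: "('a, 'b) monoid_scheme" and T :: "'a topology"
    and \<phi> :: "'a \<Rightarrow> 'a"
  assumes "pro_p_group p G T"
    and "\<forall>i\<ge>1. torsion_free_group
               ((G\<lparr>carrier := lower_central G T i\<rparr>) Mod (lower_central G T (Suc i)))"
    and "\<phi> \<in> iso G G" and "continuous_map T T \<phi>"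
    and "\<exists>n>0. \<forall>x \<in> carrier G. (\<phi> ^^ n) x = x"
    and "\<forall>x \<in> carrier G. mult G (m_inv G x) (\<phi> x) \<in> closed_commutator G T (carrier G) (carrier G)"
  shows "\<forall>x \<in> carrier G. \<phi> x = x"
proof
  interpret pro_p G T p using pro_p_group_imp_pro_p[OF assms(1)] .
  have hom: "\<phi> \<in> hom G G" using assms(3) by (simp add: iso_def)
  obtain n where n: "n > 0" "\<And>x. x \<in> carrier G \<Longrightarrow> (\<phi> ^^ n) x = x" using assms(5) by blast
  fix x assume x: "x \<in> carrier G"
  have "inv\<^bsub>G\<^esub> x \<otimes>\<^bsub>G\<^esub> \<phi> x = \<one>\<^bsub>G\<^esub>"
    using displacement_in_lower_central[OF hom assms(4) n] assms(2,6) x hom_in_carrier[OF hom x]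
    by (intro lower_central_Inter_trivial) auto
  then show "\<phi> x = x"
    using inv_solve_left'[OF one_closed x hom_in_carrier[OF hom x]] x by simp
qed

end
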